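(* Let $a\in\mathbb{R}$, $b\in(a,\infty)$, let $p\in C([a,b],[0,\infty))$ be strictly increasing, let $g\in C([a,b],\mathbb{R})$ and $L\in(0,\infty)$ satisfy for all $x,y\in[a,b]$ with $x<y$ that $g(y)-g(x)>3L(y-x)$, and assume $\int_a^bg(x)p(x)\,\mathrm{d}x=0$. Then $L\int_a^bp(x)\,\mathrm{d}x<g(b)p(b)$. *)

theory Defs
  imports "HOL-Analysis.Analysis"
begin

end

theory Submission
  imports Defs
begin

(* Put G = g b and P = p b. Since the weighted integral of g vanishes, G * integral p equals the
   integral of (G + g) p, and the slope condition gives G + g x \<le> 2 G - 3 L (b - x). As
   0 \<le> p \<le> P, the integrand is at most P times the positive part of this linear function, a
   triangle of area 2 G^2 / (3 L). Hence 3 L * integral p \<le> 2 G P, which is less than 3 G P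
   because G > 0: otherwise g p < 0 on the open interval, contradicting the vanishing integral. *)

lemma integral_le_triangle:
  fixes f :: "real \<Rightarrow> real"
  assumes "a \<le> b" "f integrable_on {a..b}" "A \<ge> 0" "k > 0"
    and f_le: "\<And>x. x \<in> {a..b} \<Longrightarrow> f x \<le> max 0 (A - k * (b - x))"
  shows "integral {a..b} f \<le> A\<^sup>2 / (2 * k)"
proof -
  define e where "e = max a (b - A / k)"
  have e: "a \<le> e" "e \<le> b" "b - e \<le> A / k"
    using assms(1,3,4) by (auto simp: e_def)
  have "integral {a..e} f \<le> 0"
  proof (cases "e = a")
    case False
    then have "A - k * (b - x) = k * (x - e)" for x
      using \<open>k > 0\<close> by (simp add: e_def max_def field_simps split: if_splits)
    then have "f x \<le> 0" if "x \<in> {a..e}" for x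
      using f_le[of x] that e \<open>k > 0\<close> by (simp add: mult_nonneg_nonpos)
    then have "integral {a..e} f \<le> integral {a..e} (\<lambda>_. 0)"
      using e by (intro integral_le integrable_subinterval_real[OF assms(2)]) auto
    then show ?thesis
      by simp
  qed simp
  moreover have "integral {e..b} f \<le> A * (b - e) - k * (b - e)\<^sup>2 / 2"
  proof (rule has_integral_le)
    show "(f has_integral integral {e..b} f) {e..b}"
      using e by (intro integrable_integral integrable_subinterval_real[OF assms(2)]) auto
    have "((\<lambda>x. A - k * (b - x)) has_integral
        (A * b + k * (b - b)\<^sup>2 / 2) - (A * e + k * (b - e)\<^sup>2 / 2)) {e..b}"
      using e(2) by (intro fundamental_theorem_of_calculus)
        (auto intro!: derivative_eq_intros
          simp: has_real_derivative_iff_has_vector_derivative[symmetric] field_simps)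
    then show "((\<lambda>x. A - k * (b - x)) has_integral A * (b - e) - k * (b - e)\<^sup>2 / 2) {e..b}"
      by (simp add: algebra_simps)
    have "A - k * (b - x) \<ge> 0" if "x \<ge> e" for x
    proof -
      have "k * (b - x) \<le> k * (A / k)"
        using that e(3) \<open>k > 0\<close> by (intro mult_left_mono) auto
      then show ?thesis
        using \<open>k > 0\<close> by simp
    qed
    then show "f x \<le> A - k * (b - x)" if "x \<in> {e..b}" for x
      using f_le[of x] that e by auto
  qed
  moreover have "A * (b - e) - k * (b - e)\<^sup>2 / 2 \<le> A\<^sup>2 / (2 * k)"
  proof -
    have "A\<^sup>2 / (2 * k) - (A * (b - e) - k * (b - e)\<^sup>2 / 2) = (A - k * (b - e))\<^sup>2 / (2 * k)"
      using \<open>k > 0\<close> by (simp add: field_simps power2_eq_square)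
    moreover have "(A - k * (b - e))\<^sup>2 / (2 * k) \<ge> 0"
      using \<open>k > 0\<close> by simp
    ultimately show ?thesis
      by linarith
  qed
  ultimately show ?thesis
    using Henstock_Kurzweil_Integration.integral_combine[OF e(1,2) assms(2)] by linarith
qed

lemma integral_le_of_integral_mult_eq_0:
  fixes p g :: "real \<Rightarrow> real"
  assumes "a \<le> b" "p integrable_on {a..b}" "(\<lambda>x. g x * p x) integrable_on {a..b}"
    and "integral {a..b} (\<lambda>x. g x * p x) = 0"
    and "P > 0" "G > 0" "K > 0"
    and p_bounds: "\<And>x. x \<in> {a..b} \<Longrightarrow> 0 \<le> p x \<and> p x \<le> P"
    and g_le: "\<And>x. x \<in> {a..b} \<Longrightarrow> g x \<le> G - K * (b - x)"
  shows "K * integral {a..b} p \<le> 2 * G * P"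
proof -
  have int: "(\<lambda>x. (G + g x) * p x) integrable_on {a..b}"
    using integrable_add[OF integrable_on_cmult_left[OF assms(2), of G] assms(3)]
    by (simp add: distrib_right)
  have "G * integral {a..b} p = integral {a..b} (\<lambda>x. (G + g x) * p x)"
    using integral_add[OF integrable_on_cmult_left[OF assms(2), of G] assms(3)] assms(4)
    by (simp add: distrib_right)
  also have "\<dots> \<le> (2 * G * P)\<^sup>2 / (2 * (K * P))"
  proof (rule integral_le_triangle[OF assms(1) int])
    show "(G + g x) * p x \<le> max 0 (2 * G * P - K * P * (b - x))" if "x \<in> {a..b}" for x
    proof -
      define u where "u = 2 * G - K * (b - x)"
      have "(G + g x) * p x \<le> max 0 u * p x"
        using g_le[OF that] p_bounds[OF that] by (intro mult_right_mono) (auto simp: u_def)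
      also have "\<dots> \<le> max 0 u * P"
        using p_bounds[OF that] by (intro mult_left_mono) auto
      also have "\<dots> = max 0 (u * P)"
        using \<open>P > 0\<close> by (auto simp: max_def zero_le_mult_iff)
      also have "\<dots> = max 0 (2 * G * P - K * P * (b - x))"
        by (simp add: u_def algebra_simps)
      finally show ?thesis .
    qed
  qed (use assms(5-7) in auto)
  also have "\<dots> = G * (2 * G * P / K)"
    using assms(5,7) by (simp add: field_simps power2_eq_square)
  finally have "G * integral {a..b} p \<le> G * (2 * G * P / K)" .
  then have "integral {a..b} p \<le> 2 * G * P / K"
    using \<open>G > 0\<close> by (rule mult_left_le_imp_le)
  then show ?thesis
    using \<open>K > 0\<close> by (simp add: field_simps)
qed

lemma pos_at_right_end_if_integral_mult_eq_0:
  fixes p g :: "real \<Rightarrow> real"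
  assumes "a < b" "continuous_on {a..b} p" "continuous_on {a..b} g"
    and p_pos: "\<And>x. x \<in> {a<..<b} \<Longrightarrow> p x > 0"
    and g_less: "\<And>x. x \<in> {a<..<b} \<Longrightarrow> g x < g b"
    and "integral {a..b} (\<lambda>x. g x * p x) = 0"
  shows "g b > 0"
proof (rule ccontr)
  assume "\<not> g b > 0"
  then have "g x * p x < 0" if "x \<in> {a<..<b}" for x
    using g_less[OF that] p_pos[OF that] by (simp add: mult_neg_pos)
  then have "integral {a..b} (\<lambda>x. g x * p x) < integral {a..b} (\<lambda>_. 0)"
    using assms(1-3) by (intro integral_less_real continuous_intros) auto
  with assms(6) show False
    by simp
qed

theorem lemma2p8:
  fixes a b L :: real and p g :: "real \<Rightarrow> real"
  assumes "a < b"
    and "continuous_on {a..b} p"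
    and "\<forall>x\<in>{a..b}. p x \<ge> 0"
    and "strict_mono_on {a..b} p"
    and "continuous_on {a..b} g"
    and "L > 0"
    and "\<forall>x\<in>{a..b}. \<forall>y\<in>{a..b}. x < y \<longrightarrow> g y - g x > 3 * L * (y - x)"
    and "integral {a..b} (\<lambda>x. g x * p x) = 0"
  shows "L * integral {a..b} p < g b * p b"
proof -
  have p_pos: "p x > 0" if "x \<in> {a<..b}" for x
    using bspec[OF assms(3), of a] strict_mono_onD[OF assms(4), of a x] that \<open>a < b\<close> by simp
  have p_le: "p x \<le> p b" if "x \<in> {a..b}" for x
    using assms(4) that by (cases "x = b") (auto simp: strict_mono_on_def less_imp_le)
  have g_le: "g x \<le> g b - 3 * L * (b - x)" if "x \<in> {a..b}" for x
    using assms(7) that by (cases "x < b") fastforce+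
  have g_pos: "g b > 0"
  proof (rule pos_at_right_end_if_integral_mult_eq_0[OF \<open>a < b\<close> assms(2,5) p_pos _ assms(8)])
    show "g x < g b" if "x \<in> {a<..<b}" for x
    proof -
      have "3 * L * (b - x) > 0"
        using that \<open>L > 0\<close> by simp
      then show ?thesis
        using g_le[of x] that by simp
    qed
  qed simp
  have gp_int: "(\<lambda>x. g x * p x) integrable_on {a..b}"
    using assms(2,5) by (intro integrable_continuous_interval continuous_intros)
  have "3 * L * integral {a..b} p \<le> 2 * g b * p b"
  proof (rule integral_le_of_integral_mult_eq_0[OF _ _ gp_int assms(8) _ g_pos])
    show "0 \<le> p x \<and> p x \<le> p b" if "x \<in> {a..b}" for x
      using assms(3) p_le[OF that] that by blast
  qed (use \<open>a < b\<close> \<open>L > 0\<close> p_pos[of b] g_le integrable_continuous_interval[OF assms(2)] in auto)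
  moreover have "g b * p b > 0"
    using g_pos p_pos[of b] \<open>a < b\<close> by simp
  ultimately show ?thesis
    by linarith
qed

end
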